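(* For every integer $d\ge 1$, \[ \sum_{m=1}^{d} q^{\binom{m}{2}}(1-q^m) \begin{bmatrix}2d\\ d+m\end{bmatrix}_q=\frac{1-q^d}{1+q^d} \begin{bmatrix}2d\\ d\end{bmatrix}_q. \]
   Context: Notation: $(a;q)_n=(1-a)(1-aq)\cdots(1-aq^{n-1})$ and $\begin{bmatrix}n\\k\end{bmatrix}_q=\frac{(q;q)_n}{(q;q)_k(q;q)_{n-k}}$ for $n\ge k\ge0$ and $0$ otherwise. *)

theory Defs
  imports Main
begin

definition qpoch :: "'a::comm_ring_1 \<Rightarrow> 'a \<Rightarrow> nat \<Rightarrow> 'a" where
  "qpoch a q n = (\<Prod>i<n. 1 - a * q ^ i)"

definition qbinom :: "nat \<Rightarrow> nat \<Rightarrow> 'a::field \<Rightarrow> 'a" where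
  "qbinom n k q = (if k \<le> n then qpoch q q n / (qpoch q q k * qpoch q q (n - k)) else 0)"

end

theory Submission
  imports Defs
begin

text \<open>Write \<open>[n, k]\<close> for \<open>qbinom n k q\<close> and \<open>b m = [2d-1, d+m-1]\<close>. The two q-Pascal rules
  for \<open>[2d, d+m]\<close> combine to \<open>(1 - q^m) [2d, d+m] = (1 - q^d) (b m - q^m b (m+1))\<close>, so after
  weighting by \<open>q^(m choose 2)\<close> the sum telescopes to \<open>(1 - q^d) [2d-1, d]\<close>; Pascal and symmetry
  give \<open>[2d, d] = (1 + q^d) [2d-1, d]\<close>. The hypothesis \<open>q^j \<noteq> 1\<close> for \<open>1 \<le> j \<le> 2d\<close> keeps
  every q-Pochhammer symbol involved nonzero.\<close>

lemma qpoch_Suc: "qpoch a q (Suc n) = qpoch a q n * (1 - a * q ^ n)"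
  by (simp add: qpoch_def)

lemma qpoch_nonzero:
  fixes q :: "'a::field"
  assumes "\<And>j. 1 \<le> j \<Longrightarrow> j \<le> n \<Longrightarrow> q ^ j \<noteq> 1"
  shows "qpoch q q n \<noteq> 0"
proof -
  have "1 - q * q ^ i \<noteq> 0" if "i < n" for i
    using assms[of "Suc i"] that by simp
  then show ?thesis
    unfolding qpoch_def by (simp add: prod_zero_iff)
qed

lemma qbinom_symmetric:
  assumes "k \<le> n"
  shows "qbinom n (n - k) q = qbinom n k q"
  using assms by (simp add: qbinom_def mult.commute)

lemma qbinom_Suc_right_ratio:
  fixes q :: "'a::field"
  assumes "\<And>j. 1 \<le> j \<Longrightarrow> j \<le> n \<Longrightarrow> q ^ j \<noteq> 1"
  shows "qbinom n (Suc k) q * (1 - q ^ Suc k) = qbinom n k q * (1 - q ^ (n - k))"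
proof (cases "k < n")
  case True
  define r where "r = n - Suc k"
  have nk: "n - k = Suc r" using True by (simp add: r_def)
  have "qpoch q q (Suc k) \<noteq> 0" "qpoch q q (Suc r) \<noteq> 0"
    by (rule qpoch_nonzero; use assms True r_def in auto)+
  then show ?thesis
    unfolding qbinom_def nk using True
    by (simp add: qpoch_Suc r_def field_simps)
qed (simp add: qbinom_def)

lemma qbinom_Suc_Suc_ratio:
  fixes q :: "'a::field"
  assumes "\<And>j. 1 \<le> j \<Longrightarrow> j \<le> Suc n \<Longrightarrow> q ^ j \<noteq> 1"
  shows "qbinom (Suc n) (Suc k) q * (1 - q ^ Suc k) = qbinom n k q * (1 - q ^ Suc n)"
proof (cases "k \<le> n")
  case True
  have "qpoch q q (Suc k) \<noteq> 0" "qpoch q q (n - k) \<noteq> 0"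
    by (rule qpoch_nonzero; use assms True in auto)+
  then show ?thesis
    unfolding qbinom_def using True
    by (simp add: qpoch_Suc field_simps)
qed (simp add: qbinom_def)

lemma qbinom_pascal:
  fixes q :: "'a::field"
  assumes nondeg: "\<And>j. 1 \<le> j \<Longrightarrow> j \<le> Suc n \<Longrightarrow> q ^ j \<noteq> 1"
  shows qbinom_pascal_left: "qbinom (Suc n) (Suc k) q = qbinom n k q + q ^ Suc k * qbinom n (Suc k) q"
    and qbinom_pascal_right: "qbinom (Suc n) (Suc k) q = q ^ (n - k) * qbinom n k q + qbinom n (Suc k) q"
proof -
  have top: "qbinom (Suc n) (Suc k) q * (1 - q ^ Suc k) = qbinom n k q * (1 - q ^ Suc n)"
    by (rule qbinom_Suc_Suc_ratio) (use nondeg in auto)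
  have right_step: "qbinom n (Suc k) q * (1 - q ^ Suc k) = qbinom n k q * (1 - q ^ (n - k))"
    by (rule qbinom_Suc_right_ratio) (use nondeg in auto)
  have "qbinom (Suc n) (Suc k) q = qbinom n k q + q ^ Suc k * qbinom n (Suc k) q
    \<and> qbinom (Suc n) (Suc k) q = q ^ (n - k) * qbinom n k q + qbinom n (Suc k) q"
  proof (cases "k \<le> n")
    case True
    have nz: "1 - q ^ Suc k \<noteq> 0" using nondeg[of "Suc k"] True by simp
    have split: "q ^ Suc n = q ^ Suc k * q ^ (n - k)"
      using True by (simp flip: power_add)
    \<comment> \<open>\<open>1 - q^(n+1) = (1 - q^(k+1)) + q^(k+1) (1 - q^(n-k)) = q^(n-k) (1 - q^(k+1)) + (1 - q^(n-k))\<close>\<close>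
    have "(qbinom n k q + q ^ Suc k * qbinom n (Suc k) q) * (1 - q ^ Suc k)
        = qbinom n k q * (1 - q ^ Suc k) + q ^ Suc k * (qbinom n (Suc k) q * (1 - q ^ Suc k))"
     and "(q ^ (n - k) * qbinom n k q + qbinom n (Suc k) q) * (1 - q ^ Suc k)
        = q ^ (n - k) * qbinom n k q * (1 - q ^ Suc k) + qbinom n (Suc k) q * (1 - q ^ Suc k)"
      by (simp_all add: algebra_simps)
    then have "(qbinom n k q + q ^ Suc k * qbinom n (Suc k) q) * (1 - q ^ Suc k)
        = qbinom n k q * (1 - q ^ Suc n)"
     and "(q ^ (n - k) * qbinom n k q + qbinom n (Suc k) q) * (1 - q ^ Suc k)
        = qbinom n k q * (1 - q ^ Suc n)"
      unfolding right_step split by (simp_all add: algebra_simps)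
    with top nz show ?thesis by (metis mult_right_cancel)
  qed (simp add: qbinom_def)
  then show "qbinom (Suc n) (Suc k) q = qbinom n k q + q ^ Suc k * qbinom n (Suc k) q"
    and "qbinom (Suc n) (Suc k) q = q ^ (n - k) * qbinom n k q + qbinom n (Suc k) q"
    by blast+
qed

lemma qbinom_double_term:
  fixes q :: "'a::field"
  assumes nondeg: "\<And>j. 1 \<le> j \<Longrightarrow> j \<le> 2 * d \<Longrightarrow> q ^ j \<noteq> 1"
    and m: "1 \<le> m" "m \<le> d"
  shows "(1 - q ^ m) * qbinom (2 * d) (d + m) q
    = (1 - q ^ d) * (qbinom (2 * d - 1) (d + m - 1) q - q ^ m * qbinom (2 * d - 1) (d + m) q)"
proof -
  define n where "n = 2 * d - 1"
  define k where "k = d + m - 1"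
  have idx: "Suc n = 2 * d" "Suc k = d + m" "n - k = d - m"
    using m by (simp_all add: n_def k_def)
  have nondeg': "\<And>j. 1 \<le> j \<Longrightarrow> j \<le> Suc n \<Longrightarrow> q ^ j \<noteq> 1"
    using nondeg idx by simp
  note left = qbinom_pascal_left[where n = n and k = k, OF nondeg', unfolded idx]
  note right = qbinom_pascal_right[where n = n and k = k, OF nondeg', unfolded idx]
  have powers: "q ^ (d + m) = q ^ d * q ^ m" "q ^ m * q ^ (d - m) = q ^ d"
    using m by (simp_all add: power_add flip: power_add)
  have "(1 - q ^ m) * qbinom (2 * d) (d + m) q
      = qbinom (2 * d) (d + m) q - q ^ m * qbinom (2 * d) (d + m) q"
    by (simp add: algebra_simps)
  also have "\<dots> = (qbinom n k q + q ^ (d + m) * qbinom n (d + m) q)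
      - q ^ m * (q ^ (d - m) * qbinom n k q + qbinom n (d + m) q)"
    using left right by simp
  also have "\<dots> = (1 - q ^ d) * (qbinom n k q - q ^ m * qbinom n (d + m) q)"
    unfolding powers(1) by (simp add: algebra_simps flip: powers(2))
  finally show ?thesis by (simp add: n_def k_def)
qed

lemma qbinom_central:
  fixes q :: "'a::field"
  assumes "1 \<le> d" and nondeg: "\<And>j. 1 \<le> j \<Longrightarrow> j \<le> 2 * d \<Longrightarrow> q ^ j \<noteq> 1"
  shows "qbinom (2 * d) d q = (1 + q ^ d) * qbinom (2 * d - 1) d q"
proof -
  have idx: "Suc (2 * d - 1) = 2 * d" "Suc (d - 1) = d" "2 * d - 1 - d = d - 1"
    using \<open>1 \<le> d\<close> by simp_all
  have nondeg': "\<And>j. 1 \<le> j \<Longrightarrow> j \<le> Suc (2 * d - 1) \<Longrightarrow> q ^ j \<noteq> 1"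
    using nondeg idx by simp
  have "qbinom (2 * d) d q = qbinom (2 * d - 1) (d - 1) q + q ^ d * qbinom (2 * d - 1) d q"
    using qbinom_pascal_left[where n = "2 * d - 1" and k = "d - 1", OF nondeg'] by (simp only: idx)
  moreover have "qbinom (2 * d - 1) (d - 1) q = qbinom (2 * d - 1) d q"
    using qbinom_symmetric[of d "2 * d - 1" q] \<open>1 \<le> d\<close> by (simp add: idx)
  ultimately show ?thesis by (simp add: algebra_simps)
qed

lemma qbinom_double_weighted_term:
  fixes q :: "'a::field"
  assumes "\<And>j. 1 \<le> j \<Longrightarrow> j \<le> 2 * d \<Longrightarrow> q ^ j \<noteq> 1"
    and "1 \<le> m" "m \<le> d"
  shows "q ^ (m choose 2) * (1 - q ^ m) * qbinom (2 * d) (d + m) q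
    = (1 - q ^ d) * (q ^ (m choose 2) * qbinom (2 * d - 1) (d + m - 1) q
                     - q ^ (Suc m choose 2) * qbinom (2 * d - 1) (d + Suc m - 1) q)"
proof -
  have "Suc m choose 2 = (m choose 2) + m"
    by (cases m) (simp_all add: numeral_2_eq_2)
  then have shift: "q ^ (Suc m choose 2) * qbinom (2 * d - 1) (d + Suc m - 1) q
      = q ^ (m choose 2) * (q ^ m * qbinom (2 * d - 1) (d + m) q)"
    by (simp add: power_add)
  have unweighted: "q ^ (m choose 2) * (1 - q ^ m) * qbinom (2 * d) (d + m) q
      = q ^ (m choose 2) * ((1 - q ^ d)
        * (qbinom (2 * d - 1) (d + m - 1) q - q ^ m * qbinom (2 * d - 1) (d + m) q))"
    using qbinom_double_term[of d q m] assms by (simp add: mult.assoc)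
  show ?thesis
    unfolding shift unweighted by (simp add: algebra_simps)
qed

theorem corollary1p5:
  fixes q :: "'a::field" and d :: nat
  assumes "d \<ge> 1"
    and "\<And>j. 1 \<le> j \<Longrightarrow> j \<le> 2 * d \<Longrightarrow> q ^ j \<noteq> 1"
    and "1 + q ^ d \<noteq> 0"
  shows "(\<Sum>m=1..d. q ^ (m choose 2) * (1 - q ^ m) * qbinom (2*d) (d+m) q)
         = (1 - q ^ d) / (1 + q ^ d) * qbinom (2*d) d q"
proof -
  define f where "f m = q ^ (m choose 2) * qbinom (2 * d - 1) (d + m - 1) q" for m
  have "(\<Sum>m=1..d. q ^ (m choose 2) * (1 - q ^ m) * qbinom (2*d) (d+m) q)
      = (1 - q ^ d) * (\<Sum>m=1..d. f m - f (Suc m))"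
    unfolding sum_distrib_left
    by (rule sum.cong) (simp_all add: f_def qbinom_double_weighted_term[OF assms(2)])
  also have "(\<Sum>m=1..d. f m - f (Suc m)) = f 1 - f (Suc d)"
    using sum_Suc_diff[of 1 d "\<lambda>m. - f m"] by simp
  also have "f (Suc d) = 0"
    using assms(1) by (auto simp: f_def qbinom_def)
  also have "f 1 = qbinom (2 * d - 1) d q"
    by (simp add: f_def numeral_2_eq_2)
  finally show ?thesis
    using qbinom_central[OF assms(1,2)] assms(3) by simp
qed

end
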